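(* Let $\mu$ be a $\sigma$-finite positive measure on $(\Omega,\mathcal B)$, written as $\mu=\mu_c+\mu_a$ where $\mu_c$ has no atoms and $\mu_a$ is purely atomic (so $\mu_c$ is the restriction of $\mu$ to the complement $C$ of the union of the atoms of $\mu$). Let $\nu$ be a $\sigma$-finite signed measure on $(\Omega,\mathcal B)$ satisfying condition $(\mathcal L)$ with respect to $\mu$. Then $\frac{d\nu}{d\mu_c}$ is constant, i.e. the restriction of $\nu$ to $C$ has Radon–Nikodym derivative with respect to $\mu_c$ which is $\mu_c$-a.e. equal to a constant.
   Context: A $\sigma$-finite signed measure is a countably additive extended-real-valued set function vanishing on $\emptyset$, taking at most one of the values $\pm\infty$, with $\sigma$-finite total variation. An atom of $\mu$ is a set $A\in\mathcal B$ with $\mu(A)>0$ such that every measurable $B\subset A$ has $\mu(B)\in\{0,\mu(A)\}$. $\nu$ satisfies $(\mathcal L)$ with respect to $\mu$ if for all $A,B\in\mathcal B$ with $\mu(A)=\mu(B)\neq\pm\infty$ one has $\nu(A)=\nu(B)\neq\pm\infty$. *)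

theory Defs
  imports "HOL-Probability.Probability"
begin

definition atom :: "'a measure \<Rightarrow> 'a set \<Rightarrow> bool" where
  "atom M A \<longleftrightarrow> A \<in> sets M \<and> emeasure M A > 0 \<and>
     (\<forall>B\<in>sets M. B \<subseteq> A \<longrightarrow> emeasure M B = 0 \<or> emeasure M B = emeasure M A)"

definition atomless :: "'a measure \<Rightarrow> bool" where
  "atomless M \<longleftrightarrow> \<not> (\<exists>A. atom M A)"

definition purely_atomic :: "'a measure \<Rightarrow> bool" where
  "purely_atomic M \<longleftrightarrow> (\<forall>B\<in>sets M. emeasure M B > 0 \<longrightarrow> (\<exists>A. atom M A \<and> A \<subseteq> B))"

definition total_variation :: "'a measure \<Rightarrow> ('a set \<Rightarrow> ereal) \<Rightarrow> 'a set \<Rightarrow> ereal" where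
  "total_variation M \<nu> E =
     (SUP F \<in> {F. finite F \<and> F \<subseteq> sets M \<and> disjoint F \<and> \<Union>F = E}. \<Sum>B\<in>F. \<bar>\<nu> B\<bar>)"

definition signed_measure :: "'a measure \<Rightarrow> ('a set \<Rightarrow> ereal) \<Rightarrow> bool" where
  "signed_measure M \<nu> \<longleftrightarrow>
     \<nu> {} = 0 \<and>
     \<not> (\<exists>A\<in>sets M. \<exists>B\<in>sets M. \<nu> A = \<infinity> \<and> \<nu> B = -\<infinity>) \<and>
     (\<forall>A::nat \<Rightarrow> 'a set. range A \<subseteq> sets M \<longrightarrow> disjoint_family A \<longrightarrow>
        (\<lambda>n. \<nu> (A n)) sums \<nu> (\<Union>n. A n))"

definition sigma_finite_signed_measure :: "'a measure \<Rightarrow> ('a set \<Rightarrow> ereal) \<Rightarrow> bool" where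
  "sigma_finite_signed_measure M \<nu> \<longleftrightarrow> signed_measure M \<nu> \<and>
     (\<exists>\<Omega>::nat \<Rightarrow> 'a set. range \<Omega> \<subseteq> sets M \<and> (\<Union>n. \<Omega> n) = space M \<and>
        (\<forall>n. total_variation M \<nu> (\<Omega> n) < \<infinity>))"

definition cond_L :: "'a measure \<Rightarrow> ('a set \<Rightarrow> ereal) \<Rightarrow> bool" where
  "cond_L M \<nu> \<longleftrightarrow> (\<forall>A\<in>sets M. \<forall>B\<in>sets M. emeasure M A = emeasure M B \<and> emeasure M A \<noteq> \<infinity>
      \<longrightarrow> \<nu> A = \<nu> B \<and> \<bar>\<nu> A\<bar> \<noteq> \<infinity>)"

end

theory Submission
  imports Defs
begin

text \<open>
  On the atomless part \<open>C\<close>, Sierpinski's theorem makes every value in \<open>[0, \<mu>(B)]\<close> the measure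
  of a measurable subset of \<open>B\<close>. By condition (L), \<open>\<nu>(D)\<close> depends only on \<open>\<mu>(D)\<close> for sets
  \<open>D \<subseteq> C\<close> of finite measure, say \<open>\<nu>(D) = f(\<mu>(D))\<close>, and Sierpinski's theorem makes \<open>f\<close>
  additive on every interval \<open>[0, \<mu>(B)]\<close>. The \<open>\<sigma>\<close>-finiteness of the total variation of \<open>\<nu>\<close>
  bounds \<open>f\<close> near \<open>0\<close>, so \<open>f\<close> is linear, as for Cauchy's functional equation. Countable
  additivity of \<open>\<nu>\<close> and \<open>\<sigma>\<close>-finiteness of \<open>\<mu>\<close> extend the proportionality to all of \<open>C\<close>.
\<close>

section \<open>Atomless measures\<close>

lemma atomlessD:
  assumes "atomless M" "E \<in> sets M" "0 < emeasure M E"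
  shows "\<exists>F\<in>sets M. F \<subseteq> E \<and> emeasure M F \<noteq> 0 \<and> emeasure M F \<noteq> emeasure M E"
  using assms unfolding atomless_def atom_def by auto

lemma atomless_exists_half_subset:
  assumes "atomless M" "E \<in> fmeasurable M" "0 < measure M E"
  shows "\<exists>F\<in>sets M. F \<subseteq> E \<and> 0 < measure M F \<and> 2 * measure M F \<le> measure M E"
proof -
  have "0 < emeasure M E"
    using assms(2,3) by (simp add: emeasure_eq_measure2)
  then obtain G where G: "G \<in> sets M" "G \<subseteq> E" "emeasure M G \<noteq> 0" "emeasure M G \<noteq> emeasure M E"
    using atomlessD[OF assms(1) fmeasurableD[OF assms(2)]] by blast
  have G_fin: "G \<in> fmeasurable M"
    using fmeasurableI2[OF assms(2) G(2,1)] .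
  have "0 < measure M G"
    using G(3) G_fin by (simp add: emeasure_eq_measure2 less_le)
  moreover have "measure M G < measure M E"
    using G(2,4) G_fin assms(2) measure_mono_fmeasurable[OF G(2,1) assms(2)]
    by (auto simp: emeasure_eq_measure2)
  moreover have "measure M (E - G) = measure M E - measure M G"
    using assms(2) G by (intro measure_Diff) (auto simp: fmeasurableD2)
  ultimately show ?thesis
  proof (cases "2 * measure M G \<le> measure M E")
    case False
    then show ?thesis
      using G assms(2) \<open>measure M (E - G) = _\<close> \<open>measure M G < _\<close> by (intro bexI[of _ "E - G"]) auto
  qed (use G in blast)
qed

lemma atomless_exists_small_subset:
  assumes "atomless M" "E \<in> fmeasurable M" "0 < measure M E" "0 < e"
  shows "\<exists>F\<in>sets M. F \<subseteq> E \<and> 0 < measure M F \<and> measure M F < e"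
proof -
  have halves: "\<exists>F\<in>sets M. F \<subseteq> E \<and> 0 < measure M F \<and> 2 ^ n * measure M F \<le> measure M E" for n
  proof (induction n)
    case (Suc n)
    then obtain F where F: "F \<in> sets M" "F \<subseteq> E" "0 < measure M F" "2 ^ n * measure M F \<le> measure M E"
      by blast
    obtain G where G: "G \<in> sets M" "G \<subseteq> F" "0 < measure M G" "2 * measure M G \<le> measure M F"
      using atomless_exists_half_subset[OF assms(1) fmeasurableI2[OF assms(2) F(2,1)] F(3)] by blast
    have "2 ^ Suc n * measure M G = 2 ^ n * (2 * measure M G)"
      by simp
    also have "\<dots> \<le> 2 ^ n * measure M F"
      using G(4) by simp
    also have "\<dots> \<le> measure M E"
      by (rule F(4))
    finally show ?case
      using F G by (intro bexI[of _ G]) auto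
  qed (use assms in auto)
  obtain n :: nat where "measure M E / e < 2 ^ n"
    using real_arch_pow[of 2] by auto
  then have "measure M E < 2 ^ n * e"
    using assms(4) by (simp add: divide_less_eq mult.commute)
  moreover obtain F where "F \<in> sets M" "F \<subseteq> E" "0 < measure M F" "2 ^ n * measure M F \<le> measure M E"
    using halves by blast
  ultimately have "2 ^ n * measure M F < 2 ^ n * e"
    by linarith
  then show ?thesis
    using \<open>F \<in> sets M\<close> \<open>F \<subseteq> E\<close> \<open>0 < measure M F\<close> by (intro bexI[of _ F]) auto
qed

text \<open>
  One step of the greedy exhaustion in Sierpinski's theorem: \<open>D'\<close> adds to \<open>D\<close> at least half
  of the largest measure that can still be added inside \<open>B\<close> without exceeding \<open>t\<close>.
\<close>
lemma measure_greedy_extension: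
  assumes "B \<in> fmeasurable M" "D \<in> sets M" "D \<subseteq> B" "measure M D \<le> t"
  shows "\<exists>D'\<in>sets M. D \<subseteq> D' \<and> D' \<subseteq> B \<and> measure M D' \<le> t \<and>
    (\<forall>E\<in>sets M. E \<subseteq> B - D \<longrightarrow> measure M D + measure M E \<le> t \<longrightarrow>
       measure M E \<le> 2 * (measure M D' - measure M D))"
proof -
  define S where "S = {measure M E | E. E \<in> sets M \<and> E \<subseteq> B - D \<and> measure M D + measure M E \<le> t}"
  have "0 \<in> S"
    unfolding S_def using assms(4) by (auto intro!: exI[of _ "{}"])
  have bdd: "bdd_above S"
    unfolding S_def by (rule bdd_aboveI[of _ "t - measure M D"]) auto
  obtain E0 where E0: "E0 \<in> sets M" "E0 \<subseteq> B - D" "measure M D + measure M E0 \<le> t"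
    "Sup S \<le> 2 * measure M E0"
  proof (cases "Sup S = 0")
    case True
    then show ?thesis
      using that[of "{}"] assms(4) by simp
  next
    case False
    then have "Sup S / 2 < Sup S"
      using cSup_upper[OF \<open>0 \<in> S\<close> bdd] by simp
    then obtain x where "x \<in> S" "Sup S / 2 < x"
      using less_cSup_iff[OF _ bdd] \<open>0 \<in> S\<close> by blast
    then show ?thesis
      using that unfolding S_def by fastforce
  qed
  have E0_fin: "E0 \<in> fmeasurable M" "D \<in> fmeasurable M"
    using assms E0 by (auto intro: fmeasurableI2)
  have extension: "measure M (D \<union> E0) = measure M D + measure M E0"
    using E0 E0_fin by (intro measure_Union) (auto simp: fmeasurableD2)
  have le_Sup: "measure M E \<le> Sup S"
    if "E \<in> sets M" "E \<subseteq> B - D" "measure M D + measure M E \<le> t" for E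
  proof -
    have "measure M E \<in> S"
      unfolding S_def using that by blast
    then show ?thesis
      using bdd by (rule cSup_upper)
  qed
  have "measure M E \<le> 2 * (measure M (D \<union> E0) - measure M D)"
    if "E \<in> sets M" "E \<subseteq> B - D" "measure M D + measure M E \<le> t" for E
    unfolding extension using le_Sup[OF that] E0(4) by simp
  then show ?thesis
    using assms E0 extension by (intro bexI[of _ "D \<union> E0"]) auto
qed

lemma measure_greedy_sequence:
  assumes "B \<in> fmeasurable M" "0 \<le> t"
  obtains Ds :: "nat \<Rightarrow> 'a set"
  where "\<And>n. Ds n \<in> sets M" "\<And>n. Ds n \<subseteq> B" "\<And>n. measure M (Ds n) \<le> t" "incseq Ds"
    "\<And>n E. E \<in> sets M \<Longrightarrow> E \<subseteq> B - Ds n \<Longrightarrow> measure M (Ds n) + measure M E \<le> t \<Longrightarrow>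
      measure M E \<le> 2 * (measure M (Ds (Suc n)) - measure M (Ds n))"
proof -
  let ?gap = "\<lambda>D D'. \<forall>E\<in>sets M. E \<subseteq> B - D \<longrightarrow> measure M D + measure M E \<le> t \<longrightarrow>
    measure M E \<le> 2 * (measure M D' - measure M D)"
  have "\<exists>Ds. \<forall>n. (Ds n \<in> sets M \<and> Ds n \<subseteq> B \<and> measure M (Ds n) \<le> t) \<and>
      Ds n \<subseteq> Ds (Suc n) \<and> ?gap (Ds n) (Ds (Suc n))"
  proof (rule dependent_nat_choice)
    show "\<exists>D. D \<in> sets M \<and> D \<subseteq> B \<and> measure M D \<le> t"
      using assms(2) by (intro exI[of _ "{}"]) auto
    fix D n
    assume "D \<in> sets M \<and> D \<subseteq> B \<and> measure M D \<le> t"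
    then obtain D' where "D' \<in> sets M" "D \<subseteq> D'" "D' \<subseteq> B" "measure M D' \<le> t" "?gap D D'"
      using measure_greedy_extension[OF assms(1), of D t] by auto
    then show "\<exists>D'. (D' \<in> sets M \<and> D' \<subseteq> B \<and> measure M D' \<le> t) \<and> D \<subseteq> D' \<and> ?gap D D'"
      by (intro exI[of _ D']) simp
  qed
  then obtain Ds where "\<forall>n. (Ds n \<in> sets M \<and> Ds n \<subseteq> B \<and> measure M (Ds n) \<le> t) \<and>
      Ds n \<subseteq> Ds (Suc n) \<and> ?gap (Ds n) (Ds (Suc n))"
    by (rule exE)
  then show ?thesis
    by (intro that[of Ds] incseq_SucI) simp_all
qed

lemma measure_greedy_exhaustion:
  assumes "B \<in> fmeasurable M" "0 \<le> t"
  obtains D where "D \<in> sets M" "D \<subseteq> B" "measure M D \<le> t"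
    "\<And>E. E \<in> sets M \<Longrightarrow> E \<subseteq> B - D \<Longrightarrow> measure M D + measure M E \<le> t \<Longrightarrow> measure M E = 0"
proof -
  obtain Ds where Ds: "\<And>n. Ds n \<in> sets M" "\<And>n. Ds n \<subseteq> B" "\<And>n. measure M (Ds n) \<le> t" "incseq Ds"
    and Ds_gap: "\<And>n E. E \<in> sets M \<Longrightarrow> E \<subseteq> B - Ds n \<Longrightarrow> measure M (Ds n) + measure M E \<le> t \<Longrightarrow>
      measure M E \<le> 2 * (measure M (Ds (Suc n)) - measure M (Ds n))"
    using measure_greedy_sequence[OF assms] by blast
  define D where "D = (\<Union>n. Ds n)"
  have D: "D \<in> sets M" "D \<subseteq> B"
    unfolding D_def using Ds by auto
  have D_fin: "D \<in> fmeasurable M"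
    using fmeasurableI2[OF assms(1) D(2,1)] .
  have lim: "(\<lambda>n. measure M (Ds n)) \<longlonglongrightarrow> measure M D"
    unfolding D_def using Ds(1,4) fmeasurableD2[OF D_fin]
    by (intro Lim_measure_incseq) (auto simp: D_def)
  have "(\<lambda>n. measure M (Ds (Suc n)) - measure M (Ds n)) \<longlonglongrightarrow> 0"
    using tendsto_diff[OF LIMSEQ_Suc[OF lim] lim] by simp
  then have gaps_to_0: "(\<lambda>n. 2 * (measure M (Ds (Suc n)) - measure M (Ds n))) \<longlonglongrightarrow> 0"
    by (rule tendsto_mult_right_zero)
  have "measure M D \<le> t"
    using lim by (rule LIMSEQ_le_const2) (use Ds(3) in blast)
  moreover have "measure M E = 0"
    if E: "E \<in> sets M" "E \<subseteq> B - D" "measure M D + measure M E \<le> t" for E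
  proof -
    have "measure M E \<le> 2 * (measure M (Ds (Suc n)) - measure M (Ds n))" for n
    proof -
      have "Ds n \<subseteq> D"
        unfolding D_def by blast
      then have "measure M (Ds n) + measure M E \<le> t"
        using measure_mono_fmeasurable[OF _ Ds(1) D_fin] E(3) by force
      moreover have "E \<subseteq> B - Ds n"
        using E(2) \<open>Ds n \<subseteq> D\<close> by blast
      ultimately show ?thesis
        using Ds_gap[OF E(1)] by blast
    qed
    then have "measure M E \<le> 0"
      using gaps_to_0 by (intro LIMSEQ_le_const) auto
    then show ?thesis
      using measure_nonneg[of M E] by linarith
  qed
  ultimately show ?thesis
    using D that by blast
qed

lemma atomless_intermediate_value:
  assumes "atomless M" "B \<in> fmeasurable M" "0 \<le> t" "t \<le> measure M B"
  shows "\<exists>D\<in>sets M. D \<subseteq> B \<and> measure M D = t"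
proof -
  obtain D where D: "D \<in> sets M" "D \<subseteq> B" "measure M D \<le> t"
    and saturated: "\<And>E. E \<in> sets M \<Longrightarrow> E \<subseteq> B - D \<Longrightarrow> measure M D + measure M E \<le> t \<Longrightarrow> measure M E = 0"
    using measure_greedy_exhaustion[OF assms(2,3)] by blast
  have "\<not> measure M D < t"
  proof
    assume "measure M D < t"
    have "measure M (B - D) = measure M B - measure M D"
      using assms(2) D by (intro measure_Diff) (auto simp: fmeasurableD2)
    then have "0 < measure M (B - D)"
      using \<open>measure M D < t\<close> assms(4) by linarith
    then obtain E where "E \<in> sets M" "E \<subseteq> B - D" "0 < measure M E" "measure M E < t - measure M D"
      using atomless_exists_small_subset[OF assms(1) fmeasurable_Diff[OF assms(2) D(1)]] \<open>measure M D < t\<close>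
      by (metis diff_gt_0_iff_gt)
    then show False
      using saturated[of E] by simp
  qed
  then show ?thesis
    using D by (intro bexI[of _ D]) auto
qed

lemma atomless_disjoint_subsets:
  assumes "atomless M" "B \<in> fmeasurable M" "0 \<le> x" "0 \<le> y" "x + y \<le> measure M B"
  shows "\<exists>D1\<in>sets M. \<exists>D2\<in>sets M. D1 \<union> D2 \<subseteq> B \<and> D1 \<inter> D2 = {} \<and>
    measure M D1 = x \<and> measure M D2 = y"
proof -
  obtain D where D: "D \<in> sets M" "D \<subseteq> B" "measure M D = x + y"
    using atomless_intermediate_value[OF assms(1,2)] assms(3-5) by (metis add_nonneg_nonneg)
  have D_fin: "D \<in> fmeasurable M"
    using fmeasurableI2[OF assms(2) D(2,1)] .
  obtain D1 where D1: "D1 \<in> sets M" "D1 \<subseteq> D" "measure M D1 = x"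
    using atomless_intermediate_value[OF assms(1) D_fin, of x] D(3) assms(3,4) by auto
  have "measure M (D - D1) = y"
    using D_fin D(1) D1 D(3) by (subst measure_Diff) (auto simp: fmeasurableD2)
  then show ?thesis
    using D D1 by (intro bexI[of _ D1] bexI[of _ "D - D1"]) auto
qed

section \<open>Bounded additive functions on an interval\<close>

lemma additive_on_interval_of_nat_mult:
  fixes g :: "real \<Rightarrow> real"
  assumes add: "\<And>x y. 0 \<le> x \<Longrightarrow> 0 \<le> y \<Longrightarrow> x + y \<le> L \<Longrightarrow> g (x + y) = g x + g y"
    and "0 \<le> x" "real k * x \<le> L"
  shows "g (real k * x) = real k * g x"
  using assms(3)
proof (induction k)
  case 0
  then show ?case
    using add[of 0 0] by simp
next
  case (Suc k)
  have "real k * x \<le> L"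
    using Suc.prems \<open>0 \<le> x\<close> by (smt (verit) mult_right_mono of_nat_Suc)
  then show ?case
    using add[of "real k * x" x] Suc \<open>0 \<le> x\<close> by (simp add: algebra_simps)
qed

lemma additive_bounded_vanishing_bound:
  fixes g :: "real \<Rightarrow> real"
  assumes "0 < T" "T \<le> L" "g T = 0"
    and add: "\<And>x y. 0 \<le> x \<Longrightarrow> 0 \<le> y \<Longrightarrow> x + y \<le> L \<Longrightarrow> g (x + y) = g x + g y"
    and bounded: "\<And>x. 0 \<le> x \<Longrightarrow> x \<le> T \<Longrightarrow> \<bar>g x\<bar> \<le> K"
    and "0 \<le> x" "x \<le> L" "0 < m"
  shows "real m * \<bar>g x\<bar> \<le> K"
proof -
  txt \<open>Write \<open>x = k u + r\<close> with \<open>u = T / m\<close> and \<open>0 \<le> r < u\<close>; then \<open>g u = 0\<close> and \<open>g x = g r\<close>.\<close>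
  define u where "u = T / m"
  have "0 < u"
    unfolding u_def using \<open>0 < T\<close> \<open>0 < m\<close> by simp
  have "real m * g u = 0"
    using additive_on_interval_of_nat_mult[of L g u m, OF add] \<open>0 < m\<close> \<open>0 < u\<close> assms(2,3)
    by (simp add: u_def)
  then have "g u = 0"
    using \<open>0 < m\<close> by simp
  define k where "k = nat \<lfloor>x / u\<rfloor>"
  have "real k = of_int \<lfloor>x / u\<rfloor>"
    unfolding k_def using \<open>0 < u\<close> \<open>0 \<le> x\<close> by simp
  then have "real k \<le> x / u" "x / u < real k + 1"
    by linarith+
  then have k: "real k * u \<le> x" "x < real k * u + u"
    using \<open>0 < u\<close> by (simp_all add: field_simps)
  define r where "r = x - real k * u"
  have r: "0 \<le> r" "r < u"
    using k unfolding r_def by auto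
  then have "real m * r \<le> T"
    using \<open>0 < m\<close> unfolding u_def by (simp add: pos_less_divide_eq mult.commute)
  have "g x = real k * g u + g r"
    using add[of "real k * u" r] additive_on_interval_of_nat_mult[of L g u k, OF add] \<open>0 < u\<close> k \<open>x \<le> L\<close>
    unfolding r_def by simp
  also have "\<dots> = g r"
    using \<open>g u = 0\<close> by simp
  finally show ?thesis
    using bounded[OF _ \<open>real m * r \<le> T\<close>] additive_on_interval_of_nat_mult[of L g r m, OF add] r(1)
      \<open>real m * r \<le> T\<close> assms(2)
    by (simp add: abs_mult)
qed

lemma additive_bounded_vanishing_on_interval:
  fixes g :: "real \<Rightarrow> real"
  assumes "0 < T" "T \<le> L" "g T = 0"
    and add: "\<And>x y. 0 \<le> x \<Longrightarrow> 0 \<le> y \<Longrightarrow> x + y \<le> L \<Longrightarrow> g (x + y) = g x + g y"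
    and bounded: "\<And>x. 0 \<le> x \<Longrightarrow> x \<le> T \<Longrightarrow> \<bar>g x\<bar> \<le> K"
    and "0 \<le> x" "x \<le> L"
  shows "g x = 0"
proof (rule ccontr)
  assume "g x \<noteq> 0"
  obtain m :: nat where m: "K / \<bar>g x\<bar> < m"
    using reals_Archimedean2 by blast
  have "0 \<le> K"
    using bounded[of 0] \<open>0 < T\<close> by linarith
  then have "0 < m"
    using m by (smt (verit) divide_nonneg_nonneg abs_ge_zero of_nat_0_less_iff)
  have "K < m * \<bar>g x\<bar>"
    using m \<open>g x \<noteq> 0\<close> by (simp add: pos_divide_less_eq)
  then show False
    using additive_bounded_vanishing_bound[OF assms \<open>0 < m\<close>] by linarith
qed

lemma additive_bounded_linear_on_interval:
  fixes f :: "real \<Rightarrow> real"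
  assumes "0 < T" "T \<le> L"
    and add: "\<And>x y. 0 \<le> x \<Longrightarrow> 0 \<le> y \<Longrightarrow> x + y \<le> L \<Longrightarrow> f (x + y) = f x + f y"
    and bounded: "\<And>x. 0 \<le> x \<Longrightarrow> x \<le> T \<Longrightarrow> \<bar>f x\<bar> \<le> K"
    and "0 \<le> x" "x \<le> L"
  shows "f x = x * (f T / T)"
proof -
  let ?c = "f T / T"
  have "f x - x * ?c = 0"
  proof (rule additive_bounded_vanishing_on_interval[where g = "\<lambda>x. f x - x * ?c"])
    show "f T - T * ?c = 0"
      using \<open>0 < T\<close> by simp
    show "\<bar>f y - y * ?c\<bar> \<le> K + T * \<bar>?c\<bar>" if "0 \<le> y" "y \<le> T" for y
    proof -
      have "\<bar>y * ?c\<bar> \<le> T * \<bar>?c\<bar>"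
        unfolding abs_mult abs_of_nonneg[OF that(1)] using that(2) by (rule mult_right_mono) simp
      then show ?thesis
        using bounded[OF that] by (intro order_trans[OF abs_triangle_ineq4 add_mono])
    qed
  qed (use assms add in \<open>auto simp: algebra_simps add_divide_distrib\<close>)
  then show ?thesis
    by simp
qed

section \<open>Signed measures and condition (L)\<close>

lemma signed_measure_empty: "signed_measure M \<nu> \<Longrightarrow> \<nu> {} = 0"
  unfolding signed_measure_def by blast

lemma signed_measure_sums:
  "signed_measure M \<nu> \<Longrightarrow> range A \<subseteq> sets M \<Longrightarrow> disjoint_family A \<Longrightarrow>
    (\<lambda>n. \<nu> (A n)) sums \<nu> (\<Union>n. A n)"
  unfolding signed_measure_def by blast

lemma signed_measure_Un:
  assumes "signed_measure M \<nu>" "A \<in> sets M" "B \<in> sets M" "A \<inter> B = {}"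
  shows "\<nu> (A \<union> B) = \<nu> A + \<nu> B"
proof -
  have "(\<lambda>n. \<nu> (binaryset A B n)) sums \<nu> (\<Union>n. binaryset A B n)"
    using assms(2-4)
    by (intro signed_measure_sums[OF assms(1)]) (auto simp: range_binaryset_eq disjoint_family_on_def binaryset_def)
  moreover have "(\<lambda>n. \<nu> (binaryset A B n)) sums (\<nu> A + \<nu> B)"
    using signed_measure_empty[OF assms(1)] by (rule binaryset_sums)
  ultimately show ?thesis
    by (simp add: UN_binaryset_eq sums_unique2)
qed

lemma signed_measure_restrict_space:
  assumes "signed_measure M \<nu>" "\<Omega> \<in> sets M"
  shows "signed_measure (restrict_space M \<Omega>) \<nu>"
proof -
  have sub: "sets (restrict_space M \<Omega>) \<subseteq> sets M"
    using assms(2) sets_restrict_space_iff[of \<Omega> M] by auto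
  have "\<nu> {} = 0" and no_both: "\<not> (\<exists>A\<in>sets M. \<exists>B\<in>sets M. \<nu> A = \<infinity> \<and> \<nu> B = -\<infinity>)"
    and additive: "\<And>A. range A \<subseteq> sets M \<Longrightarrow> disjoint_family A \<Longrightarrow> (\<lambda>n. \<nu> (A n)) sums \<nu> (\<Union>n. A n)"
    using assms(1) unfolding signed_measure_def by auto
  show ?thesis
    unfolding signed_measure_def
  proof (intro conjI allI impI)
    show "\<not> (\<exists>A\<in>sets (restrict_space M \<Omega>). \<exists>B\<in>sets (restrict_space M \<Omega>). \<nu> A = \<infinity> \<and> \<nu> B = -\<infinity>)"
      using no_both sub by (meson subsetD)
    show "(\<lambda>n. \<nu> (A n)) sums \<nu> (\<Union>n. A n)"
      if "range A \<subseteq> sets (restrict_space M \<Omega>)" "disjoint_family A" for A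
      using that sub by (intro additive) auto
  qed fact
qed

lemma abs_le_total_variation:
  assumes "D \<in> sets M" "W \<in> sets M" "D \<subseteq> W"
  shows "\<bar>\<nu> D\<bar> \<le> total_variation M \<nu> W"
proof -
  have "{D, W - D} \<in> {F. finite F \<and> F \<subseteq> sets M \<and> disjoint F \<and> \<Union>F = W}"
    using assms by (auto simp: disjoint_def)
  then have "(\<Sum>B\<in>{D, W - D}. \<bar>\<nu> B\<bar>) \<le> total_variation M \<nu> W"
    unfolding total_variation_def by (rule SUP_upper)
  moreover have "\<bar>\<nu> D\<bar> \<le> (\<Sum>B\<in>{D, W - D}. \<bar>\<nu> B\<bar>)"
    by (cases "D = W - D") (simp_all add: add_increasing2)
  ultimately show ?thesis
    by simp
qed

text \<open>All that is used of the \<open>\<sigma>\<close>-finiteness of the total variation of \<open>\<nu>\<close>.\<close>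
definition bounded_cover :: "'a measure \<Rightarrow> ('a set \<Rightarrow> ereal) \<Rightarrow> (nat \<Rightarrow> 'a set) \<Rightarrow> bool" where
  "bounded_cover M \<nu> \<Omega> \<longleftrightarrow> range \<Omega> \<subseteq> sets M \<and> (\<Union>n. \<Omega> n) = space M \<and>
     (\<forall>n. \<exists>K. \<forall>D\<in>sets M. D \<subseteq> \<Omega> n \<longrightarrow> \<bar>\<nu> D\<bar> \<le> ereal K)"

lemma sigma_finite_signed_measure_bounded_cover:
  assumes "sigma_finite_signed_measure M \<nu>"
  shows "\<exists>\<Omega>. bounded_cover M \<nu> \<Omega>"
proof -
  obtain \<Omega> :: "nat \<Rightarrow> 'a set" where \<Omega>: "range \<Omega> \<subseteq> sets M" "(\<Union>n. \<Omega> n) = space M"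
    "\<And>n. total_variation M \<nu> (\<Omega> n) < \<infinity>"
    using assms unfolding sigma_finite_signed_measure_def by blast
  have "\<exists>K. \<forall>D\<in>sets M. D \<subseteq> \<Omega> n \<longrightarrow> \<bar>\<nu> D\<bar> \<le> ereal K" for n
  proof (intro exI ballI impI)
    fix D
    assume "D \<in> sets M" "D \<subseteq> \<Omega> n"
    then have "\<bar>\<nu> D\<bar> \<le> total_variation M \<nu> (\<Omega> n)"
      using \<Omega>(1) by (intro abs_le_total_variation) auto
    moreover have "total_variation M \<nu> (\<Omega> n) = ereal (real_of_ereal (total_variation M \<nu> (\<Omega> n)))"
      using \<Omega>(3)[of n] order_trans[OF abs_ereal_pos calculation] by (intro ereal_real'[symmetric]) auto
    ultimately show "\<bar>\<nu> D\<bar> \<le> ereal (real_of_ereal (total_variation M \<nu> (\<Omega> n)))"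
      by simp
  qed
  then show ?thesis
    using \<Omega>(1,2) unfolding bounded_cover_def by blast
qed

lemma bounded_cover_restrict_space:
  assumes "bounded_cover M \<nu> \<Omega>" "C \<in> sets M"
  shows "bounded_cover (restrict_space M C) \<nu> (\<lambda>n. \<Omega> n \<inter> C)"
  unfolding bounded_cover_def
proof (intro conjI allI)
  have C: "C \<inter> space M \<in> sets M" "C \<subseteq> space M"
    using assms(2) sets.sets_into_space by auto
  show "range (\<lambda>n. \<Omega> n \<inter> C) \<subseteq> sets (restrict_space M C)"
    "(\<Union>n. \<Omega> n \<inter> C) = space (restrict_space M C)"
    using assms C unfolding bounded_cover_def by (auto simp: sets_restrict_space_iff space_restrict_space)
  fix n
  obtain K where "\<forall>D\<in>sets M. D \<subseteq> \<Omega> n \<longrightarrow> \<bar>\<nu> D\<bar> \<le> ereal K"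
    using assms(1) unfolding bounded_cover_def by blast
  then show "\<exists>K. \<forall>D\<in>sets (restrict_space M C). D \<subseteq> \<Omega> n \<inter> C \<longrightarrow> \<bar>\<nu> D\<bar> \<le> ereal K"
    using C(1) by (intro exI[of _ K]) (auto simp: sets_restrict_space_iff)
qed

lemma cond_L_eq:
  assumes "cond_L M \<nu>" "A \<in> sets M" "B \<in> sets M" "emeasure M A = emeasure M B" "emeasure M A \<noteq> \<infinity>"
  shows "\<nu> A = \<nu> B"
  using assms(1)[unfolded cond_L_def, rule_format, OF assms(2,3) conjI[OF assms(4,5)]] ..

lemma cond_L_finite:
  assumes "cond_L M \<nu>" "A \<in> fmeasurable M"
  shows "\<bar>\<nu> A\<bar> \<noteq> \<infinity>"
proof -
  have A: "A \<in> sets M" "emeasure M A \<noteq> \<infinity>"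
    using assms(2) by (auto simp: fmeasurable_def)
  show ?thesis
    using assms(1)[unfolded cond_L_def, rule_format, OF A(1) A(1) conjI[OF refl A(2)]] ..
qed

lemma cond_L_restrict_space:
  assumes "cond_L M \<nu>" "\<Omega> \<in> sets M"
  shows "cond_L (restrict_space M \<Omega>) \<nu>"
  unfolding cond_L_def
proof (intro ballI impI)
  have transfer: "A \<in> sets M" "emeasure (restrict_space M \<Omega>) A = emeasure M A"
    if "A \<in> sets (restrict_space M \<Omega>)" for A
    using that assms(2) sets_restrict_space_iff[of \<Omega> M] emeasure_restrict_space[of \<Omega> M A] by auto
  fix A B
  assume "A \<in> sets (restrict_space M \<Omega>)" "B \<in> sets (restrict_space M \<Omega>)"
    and "emeasure (restrict_space M \<Omega>) A = emeasure (restrict_space M \<Omega>) B \<and>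
      emeasure (restrict_space M \<Omega>) A \<noteq> \<infinity>"
  then have "A \<in> sets M" "B \<in> sets M" "emeasure M A = emeasure M B" "emeasure M A \<noteq> \<infinity>"
    using transfer by auto
  then show "\<nu> A = \<nu> B \<and> \<bar>\<nu> A\<bar> \<noteq> \<infinity>"
    by (intro conjI cond_L_eq[OF assms(1)] cond_L_finite[OF assms(1)] fmeasurableI) (auto simp: less_top)
qed

section \<open>Proportionality on the atomless part\<close>

lemma sums_ereal_cmult:
  fixes f :: "nat \<Rightarrow> ereal"
  assumes "f sums s" "\<And>i. 0 \<le> f i"
  shows "(\<lambda>i. ereal c * f i) sums (ereal c * s)"
  using tendsto_cmult_ereal[of "ereal c", OF _ assms(1)[unfolded sums_def]] assms(2)
  by (simp add: sums_def sum_ereal_right_distrib)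

lemma emeasure_Int_cover_nonzero:
  fixes A :: "nat \<Rightarrow> 'a set"
  assumes "range A \<subseteq> sets M" "E \<in> sets M" "E \<subseteq> (\<Union>n. A n)" "emeasure M E \<noteq> 0"
  shows "\<exists>n. emeasure M (E \<inter> A n) \<noteq> 0"
proof (rule ccontr)
  assume "\<nexists>n. emeasure M (E \<inter> A n) \<noteq> 0"
  then have "emeasure M (E \<inter> A n) = 0" for n
    by simp
  then have "emeasure M (\<Union>n. E \<inter> A n) = 0"
    using assms(1,2) by (intro emeasure_UN_eq_0) auto
  moreover have "(\<Union>n. E \<inter> A n) = E"
    using assms(3) by blast
  ultimately show False
    using assms(4) by simp
qed

lemma signed_measure_proportional_extend:
  assumes "sigma_finite_measure M" "signed_measure M \<nu>"
    and fin: "\<And>B. B \<in> fmeasurable M \<Longrightarrow> \<nu> B = ereal (c * measure M B)"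
    and "A \<in> sets M"
  shows "\<nu> A = ereal c * enn2ereal (emeasure M A)"
proof -
  obtain F :: "nat \<Rightarrow> 'a set" where F: "range F \<subseteq> sets M" "(\<Union>i. F i) = space M" "\<And>i. emeasure M (F i) \<noteq> \<infinity>"
    "disjoint_family F"
    using sigma_finite_measure.sigma_finite_disjoint[OF assms(1)] by blast
  define P where "P i = A \<inter> F i" for i
  have "disjoint_family P"
    using F(4) unfolding P_def disjoint_family_on_def by auto
  moreover have "range P \<subseteq> sets M" "(\<Union>i. P i) = A"
    unfolding P_def using F(1,2) assms(4) sets.sets_into_space[OF assms(4)] by auto
  ultimately have P: "range P \<subseteq> sets M" "disjoint_family P" "(\<Union>i. P i) = A"
    by auto
  have "F i \<in> fmeasurable M" for i
    using F(1,3) by (intro fmeasurableI) (auto simp: less_top)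
  then have P_fin: "P i \<in> fmeasurable M" for i
    unfolding P_def using assms(4) by (subst Int_commute) (rule fmeasurable_Int_fmeasurable)
  have "(\<lambda>i. emeasure M (P i)) sums (\<Sum>i. emeasure M (P i))"
    by (rule summable_sums[OF summableI])
  then have "(\<lambda>i. emeasure M (P i)) sums emeasure M A"
    using suminf_emeasure[OF P(1,2)] P(3) by simp
  then have "(\<lambda>i. ereal c * enn2ereal (emeasure M (P i))) sums (ereal c * enn2ereal (emeasure M A))"
    by (intro sums_ereal_cmult) simp_all
  moreover have "\<nu> (P i) = ereal c * enn2ereal (emeasure M (P i))" for i
    using fin[OF P_fin] P_fin by (simp add: emeasure_eq_measure2)
  ultimately have "(\<lambda>i. \<nu> (P i)) sums (ereal c * enn2ereal (emeasure M A))"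
    by simp
  moreover have "(\<lambda>i. \<nu> (P i)) sums \<nu> A"
    using signed_measure_sums[OF assms(2) P(1,2)] P(3) by simp
  ultimately show ?thesis
    by (simp add: sums_unique2)
qed

lemma cond_L_measure_function:
  assumes "cond_L M \<nu>"
  obtains f :: "real \<Rightarrow> real" where "\<And>D. D \<in> fmeasurable M \<Longrightarrow> \<nu> D = ereal (f (measure M D))"
proof -
  define f where "f t = real_of_ereal (\<nu> (SOME D. D \<in> fmeasurable M \<and> measure M D = t))" for t
  have "\<nu> D = ereal (f (measure M D))" if "D \<in> fmeasurable M" for D
  proof -
    define D' where "D' = (SOME D'. D' \<in> fmeasurable M \<and> measure M D' = measure M D)"
    have "D' \<in> fmeasurable M" "measure M D' = measure M D"
      unfolding D'_def using someI[of "\<lambda>D'. D' \<in> fmeasurable M \<and> measure M D' = measure M D" D] that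
      by auto
    then have "\<nu> D = \<nu> D'"
      using that by (intro cond_L_eq[OF assms]) (auto simp: emeasure_eq_measure2 fmeasurableD2)
    moreover have "\<nu> D = ereal (real_of_ereal (\<nu> D))"
      using cond_L_finite[OF assms that] by (simp add: ereal_real')
    ultimately show ?thesis
      unfolding f_def D'_def by simp
  qed
  then show ?thesis
    by (rule that)
qed

lemma atomless_cond_L_proportional_fmeasurable:
  assumes "atomless M" "signed_measure M \<nu>" "cond_L M \<nu>"
    and E: "E \<in> fmeasurable M" "0 < measure M E"
    and bounded: "\<And>D. D \<in> sets M \<Longrightarrow> D \<subseteq> E \<Longrightarrow> \<bar>\<nu> D\<bar> \<le> ereal K"
  shows "\<exists>c. \<forall>B\<in>fmeasurable M. \<nu> B = ereal (c * measure M B)"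
proof -
  obtain f where f: "\<And>D. D \<in> fmeasurable M \<Longrightarrow> \<nu> D = ereal (f (measure M D))"
    using cond_L_measure_function[OF assms(3)] by blast
  have f_add: "f (x + y) = f x + f y"
    if xy: "B \<in> fmeasurable M" "0 \<le> x" "0 \<le> y" "x + y \<le> measure M B" for B x y
  proof -
    obtain D1 D2 where D: "D1 \<in> sets M" "D2 \<in> sets M" "D1 \<union> D2 \<subseteq> B" "D1 \<inter> D2 = {}"
      "measure M D1 = x" "measure M D2 = y"
      using atomless_disjoint_subsets[OF assms(1) xy] by blast
    then have fin: "D1 \<in> fmeasurable M" "D2 \<in> fmeasurable M" "D1 \<union> D2 \<in> fmeasurable M"
      using xy(1) by (auto intro: fmeasurableI2)
    have "measure M (D1 \<union> D2) = x + y"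
      using D fin by (simp add: measure_Union fmeasurableD2)
    then have "ereal (f (x + y)) = ereal (f x) + ereal (f y)"
      using signed_measure_Un[OF assms(2) D(1,2,4)] f[OF fin(1)] f[OF fin(2)] f[OF fin(3)] D(5,6)
      by simp
    then show ?thesis
      by simp
  qed
  have f_bounded: "\<bar>f x\<bar> \<le> K" if x: "0 \<le> x" "x \<le> measure M E" for x
  proof -
    obtain D where D: "D \<in> sets M" "D \<subseteq> E" "measure M D = x"
      using atomless_intermediate_value[OF assms(1) E(1) x] by blast
    then have "D \<in> fmeasurable M"
      using E(1) by (auto intro: fmeasurableI2)
    then show ?thesis
      using bounded[OF D(1,2)] f D(3) by simp
  qed
  define c where "c = f (measure M E) / measure M E"
  have "\<nu> B = ereal (c * measure M B)" if "B \<in> fmeasurable M" for B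
  proof -
    have BE: "B \<union> E \<in> fmeasurable M"
      using that E(1) by (rule fmeasurable.Un)
    have "measure M B \<le> measure M (B \<union> E)" "measure M E \<le> measure M (B \<union> E)"
      using that E(1) BE by (auto intro!: measure_mono_fmeasurable)
    then have "f (measure M B) = measure M B * c"
      unfolding c_def using E(2) f_add[OF BE] f_bounded
      by (intro additive_bounded_linear_on_interval[of _ "measure M (B \<union> E)"]) auto
    then show ?thesis
      using f[OF that] by (simp add: mult.commute)
  qed
  then show ?thesis
    by blast
qed

lemma bounded_cover_positive_piece:
  assumes "sigma_finite_measure M" "bounded_cover M \<nu> \<Omega>" "emeasure M (space M) \<noteq> 0"
  obtains E K where "E \<in> fmeasurable M" "0 < measure M E"
    "\<And>D. D \<in> sets M \<Longrightarrow> D \<subseteq> E \<Longrightarrow> \<bar>\<nu> D\<bar> \<le> ereal K"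
proof -
  have cover: "range \<Omega> \<subseteq> sets M" "(\<Union>n. \<Omega> n) = space M"
    and bounded: "\<And>n. \<exists>K. \<forall>D\<in>sets M. D \<subseteq> \<Omega> n \<longrightarrow> \<bar>\<nu> D\<bar> \<le> ereal K"
    using assms(2) unfolding bounded_cover_def by auto
  obtain F :: "nat \<Rightarrow> 'a set" where F: "range F \<subseteq> sets M" "(\<Union>i. F i) = space M"
    "\<And>i. emeasure M (F i) \<noteq> \<infinity>"
    using sigma_finite_measure.sigma_finite[OF assms(1)] by blast
  have \<Omega>: "\<Omega> n \<in> sets M" "space M \<inter> \<Omega> n = \<Omega> n" for n
    using cover(1) sets.sets_into_space by auto
  obtain n where n: "emeasure M (\<Omega> n) \<noteq> 0"
    using emeasure_Int_cover_nonzero[OF cover(1) sets.top _ assms(3)] cover(2) \<Omega>(2) by auto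
  obtain k where k: "emeasure M (\<Omega> n \<inter> F k) \<noteq> 0"
    using emeasure_Int_cover_nonzero[OF F(1) \<Omega>(1) _ n] F(2) \<Omega>(2)[of n] by auto
  have "F k \<in> fmeasurable M"
    using F(1,3) by (intro fmeasurableI) (auto simp: less_top)
  then have E_fin: "\<Omega> n \<inter> F k \<in> fmeasurable M"
    by (subst Int_commute) (rule fmeasurable_Int_fmeasurable[OF _ \<Omega>(1)])
  moreover have "0 < measure M (\<Omega> n \<inter> F k)"
    using k E_fin by (simp add: emeasure_eq_measure2 less_le)
  moreover obtain K where "\<forall>D\<in>sets M. D \<subseteq> \<Omega> n \<longrightarrow> \<bar>\<nu> D\<bar> \<le> ereal K"
    using bounded[of n] by (elim exE)
  then have "\<bar>\<nu> D\<bar> \<le> ereal K" if "D \<in> sets M" "D \<subseteq> \<Omega> n \<inter> F k" for D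
    using that by blast
  ultimately show ?thesis
    by (rule that)
qed

lemma atomless_cond_L_proportional:
  assumes "sigma_finite_measure M" "atomless M" "signed_measure M \<nu>" "cond_L M \<nu>"
    and "bounded_cover M \<nu> \<Omega>"
  shows "\<exists>c. \<forall>A\<in>sets M. \<nu> A = ereal c * enn2ereal (emeasure M A)"
proof -
  have "\<exists>c. \<forall>B\<in>fmeasurable M. \<nu> B = ereal (c * measure M B)"
  proof (cases "emeasure M (space M) = 0")
    case True
    have "\<nu> B = ereal (0 * measure M B)" if "B \<in> fmeasurable M" for B
    proof -
      have "emeasure M B = emeasure M {}"
        using emeasure_space[of M B] True by simp
      then have "\<nu> B = \<nu> {}"
        using that by (intro cond_L_eq[OF assms(4)]) auto
      then show ?thesis
        using signed_measure_empty[OF assms(3)] by simp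
    qed
    then show ?thesis
      by (intro exI[of _ 0] ballI)
  next
    case False
    then obtain E K where "E \<in> fmeasurable M" "0 < measure M E"
      "\<And>D. D \<in> sets M \<Longrightarrow> D \<subseteq> E \<Longrightarrow> \<bar>\<nu> D\<bar> \<le> ereal K"
      using bounded_cover_positive_piece[OF assms(1,5)] by blast
    then show ?thesis
      by (rule atomless_cond_L_proportional_fmeasurable[OF assms(2-4)])
  qed
  then obtain c where "\<And>B. B \<in> fmeasurable M \<Longrightarrow> \<nu> B = ereal (c * measure M B)"
    by blast
  then show ?thesis
    using signed_measure_proportional_extend[OF assms(1,3)] by blast
qed

theorem proposition1p4:
  fixes M :: "'a measure" and \<nu> :: "'a set \<Rightarrow> ereal" and C :: "'a set"
  assumes "sigma_finite_measure M"
    and "C \<in> sets M"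
    and "atomless (restrict_space M C)"
    and "purely_atomic (restrict_space M (space M - C))"
    and "sigma_finite_signed_measure M \<nu>"
    and "cond_L M \<nu>"
  shows "\<exists>c::real. \<forall>A\<in>sets M. \<nu> (A \<inter> C) = ereal c * enn2ereal (emeasure M (A \<inter> C))"
proof -
  let ?N = "restrict_space M C"
  have "signed_measure M \<nu>"
    using assms(5) unfolding sigma_finite_signed_measure_def by blast
  obtain \<Omega> where "bounded_cover M \<nu> \<Omega>"
    using sigma_finite_signed_measure_bounded_cover[OF assms(5)] by blast
  then obtain c where c: "\<forall>A\<in>sets ?N. \<nu> A = ereal c * enn2ereal (emeasure ?N A)"
    using atomless_cond_L_proportional[OF sigma_finite_measure_restrict_space[OF assms(1,2)] assms(3)
        signed_measure_restrict_space[OF \<open>signed_measure M \<nu>\<close> assms(2)] cond_L_restrict_space[OF assms(6,2)]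
        bounded_cover_restrict_space[OF _ assms(2)]]
    by blast
  have "A \<inter> C \<in> sets ?N" "emeasure ?N (A \<inter> C) = emeasure M (A \<inter> C)" if "A \<in> sets M" for A
    using that assms(2) sets.sets_into_space[OF assms(2)]
    by (auto simp: sets_restrict_space_iff emeasure_restrict_space)
  then show ?thesis
    using c by auto
qed

end
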